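(* Let $G$ be a $2K_2$-free graph, let $a,b$ be adjacent vertices of $G$, and let $X$ be a minimal dominating set of $G$ with $a,b\in X$ and $|X|>\alpha(G)$. Let $A$ be the set of vertices not in $\{a,b\}$ adjacent to neither $a$ nor $b$, let $N$ be the set of vertices not in $\{a,b\}$ adjacent to at least one of $a,b$, let $Y=X\cap N$, and let $Z$ be the set of vertices of $A$ having at least one neighbour in $Y$. Then $|Y|=|Z|$ and every vertex of $Z$ is a private neighbour (with respect to $X$) of some vertex of $Y$.
   Context: All graphs are finite, simple and undirected. $2K_2$-free means no induced subgraph isomorphic to the disjoint union of two edges. $\alpha(G)$ is the maximum size of an independent set of $G$. A dominating set is a vertex set $D$ such that every vertex outside $D$ has a neighbour in $D$; it is minimal if no proper subset is dominating. Given a dominating set $D$ and $x\in D$, a vertex $y\notin D$ is a private neighbour of $x$ if $x$ is the only neighbour of $y$ in $D$. *)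

theory Defs
  imports Main
begin

definition simple_graph :: "'a set \<Rightarrow> ('a \<Rightarrow> 'a \<Rightarrow> bool) \<Rightarrow> bool" where
  "simple_graph V E \<longleftrightarrow> finite V \<and> (\<forall>x y. E x y \<longrightarrow> x \<in> V \<and> y \<in> V)
     \<and> (\<forall>x y. E x y \<longrightarrow> E y x) \<and> (\<forall>x. \<not> E x x)"

definition two_K2_free :: "'a set \<Rightarrow> ('a \<Rightarrow> 'a \<Rightarrow> bool) \<Rightarrow> bool" where
  "two_K2_free V E \<longleftrightarrow> \<not> (\<exists>a\<in>V. \<exists>b\<in>V. \<exists>c\<in>V. \<exists>d\<in>V.
      distinct [a, b, c, d] \<and> E a b \<and> E c d \<and>
      \<not> E a c \<and> \<not> E a d \<and> \<not> E b c \<and> \<not> E b d)"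

definition independent_set :: "'a set \<Rightarrow> ('a \<Rightarrow> 'a \<Rightarrow> bool) \<Rightarrow> 'a set \<Rightarrow> bool" where
  "independent_set V E S \<longleftrightarrow> S \<subseteq> V \<and> (\<forall>x\<in>S. \<forall>y\<in>S. \<not> E x y)"

definition alpha :: "'a set \<Rightarrow> ('a \<Rightarrow> 'a \<Rightarrow> bool) \<Rightarrow> nat" where
  "alpha V E = Max {card S | S. independent_set V E S}"

definition dominating_set :: "'a set \<Rightarrow> ('a \<Rightarrow> 'a \<Rightarrow> bool) \<Rightarrow> 'a set \<Rightarrow> bool" where
  "dominating_set V E D \<longleftrightarrow> D \<subseteq> V \<and> (\<forall>v\<in>V - D. \<exists>u\<in>D. E v u)"

definition minimal_dominating_set :: "'a set \<Rightarrow> ('a \<Rightarrow> 'a \<Rightarrow> bool) \<Rightarrow> 'a set \<Rightarrow> bool" where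
  "minimal_dominating_set V E D \<longleftrightarrow> dominating_set V E D \<and>
     (\<forall>D'. D' \<subset> D \<longrightarrow> \<not> dominating_set V E D')"

definition private_neighbour :: "'a set \<Rightarrow> ('a \<Rightarrow> 'a \<Rightarrow> bool) \<Rightarrow> 'a set \<Rightarrow> 'a \<Rightarrow> 'a \<Rightarrow> bool" where
  "private_neighbour V E D x y \<longleftrightarrow> x \<in> D \<and> y \<in> V - D \<and> E x y \<and> (\<forall>u\<in>D. E y u \<longrightarrow> u = x)"

end

theory Submission
  imports Defs
begin

text \<open>Since ab is an edge and G is 2K2-free, the set A of common non-neighbours of a and b is
  independent, so A + a is independent and |A| + 1 \<le> \<alpha>(G) < |X|. As X lies in
  {a, b} \<union> Y \<union> A, at most |Y| vertices of A lie outside X. Every y \<in> Y is dominated by a or b,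
  so by minimality it has a private neighbour, which lies in A and hence in Z; distinct vertices
  of Y have distinct private neighbours. No vertex of Z lies in X, since its private neighbour would
  lie in A and be adjacent to it. Hence |Y| \<le> |Z| \<le> |A - X| \<le> |Y|, and the private neighbours of Y
  exhaust Z.\<close>

lemma simple_graph_sym: "simple_graph V E \<Longrightarrow> E x y \<Longrightarrow> E y x"
  and simple_graph_irrefl: "simple_graph V E \<Longrightarrow> \<not> E x x"
  and simple_graph_edge_in: "simple_graph V E \<Longrightarrow> E x y \<Longrightarrow> x \<in> V \<and> y \<in> V"
  unfolding simple_graph_def by blast+

lemma independent_set_card_le_alpha:
  assumes "finite V" and "independent_set V E S"
  shows "card S \<le> alpha V E"
proof -
  have "{card S | S. independent_set V E S} \<subseteq> {..card V}"
    using assms(1) by (auto simp: independent_set_def intro: card_mono)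
  then have "finite {card S | S. independent_set V E S}"
    using finite_subset by blast
  with assms(2) show ?thesis
    unfolding alpha_def by (blast intro: Max_ge)
qed

lemma minimal_dominating_set_private_neighbour:
  assumes "simple_graph V E" and "minimal_dominating_set V E X"
    and "x \<in> X" and "w \<in> X" and "E x w"
  obtains v where "private_neighbour V E X x v"
proof -
  have dom: "dominating_set V E X"
    using assms(2) unfolding minimal_dominating_set_def by blast
  have "\<not> dominating_set V E (X - {x})"
    using assms(2,3) unfolding minimal_dominating_set_def by blast
  moreover have "X - {x} \<subseteq> V"
    using dom unfolding dominating_set_def by blast
  ultimately obtain v where v: "v \<in> V" "v \<notin> X - {x}" and no_edge: "\<forall>u\<in>X - {x}. \<not> E v u"
    unfolding dominating_set_def by blast
  have "w \<noteq> x"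
    using assms(1,5) simple_graph_irrefl by metis
  with no_edge assms(4,5) have "v \<noteq> x" by blast
  with v have "v \<in> V - X" by blast
  then obtain u where "u \<in> X" "E v u"
    using dom unfolding dominating_set_def by blast
  with no_edge have "u = x" by blast
  with \<open>E v u\<close> have "E x v"
    using assms(1) simple_graph_sym by metis
  have "private_neighbour V E X x v"
    unfolding private_neighbour_def using assms(3) \<open>v \<in> V - X\<close> \<open>E x v\<close> no_edge by blast
  then show ?thesis by (rule that)
qed

lemma private_neighbour_owner_unique:
  assumes "simple_graph V E"
    and "private_neighbour V E D x v" and "private_neighbour V E D y v"
  shows "x = y"
proof -
  have "y \<in> D" "E y v"
    using assms(3) unfolding private_neighbour_def by blast+
  then have "E v y"
    using assms(1) simple_graph_sym by metis
  with \<open>y \<in> D\<close> assms(2) show ?thesis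
    unfolding private_neighbour_def by blast
qed

lemma private_neighbour_not_adjacent:
  assumes "private_neighbour V E D x v" and "u \<in> D" and "u \<noteq> x"
  shows "\<not> E v u" and "v \<noteq> u"
  using assms unfolding private_neighbour_def by blast+

lemma two_K2_freeD:
  assumes "two_K2_free V E" and "a \<in> V" "b \<in> V" "c \<in> V" "d \<in> V"
    and "distinct [a, b, c, d]" and "E a b" and "E c d"
  shows "E a c \<or> E a d \<or> E b c \<or> E b d"
proof -
  have "\<not> (distinct [a, b, c, d] \<and> E a b \<and> E c d \<and> \<not> E a c \<and> \<not> E a d \<and> \<not> E b c \<and> \<not> E b d)"
    using assms(1-5) unfolding two_K2_free_def by blast
  with assms(6-8) show ?thesis by blast
qed

lemma two_K2_free_common_non_neighbours_nonadjacent: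
  assumes "simple_graph V E" and "two_K2_free V E" and "E a b"
    and "u \<in> V - {a, b}" "\<not> E u a" "\<not> E u b"
    and "v \<in> V - {a, b}" "\<not> E v a" "\<not> E v b"
  shows "\<not> E u v"
proof
  assume "E u v"
  then have "u \<noteq> v" "a \<noteq> b"
    using assms(1,3) simple_graph_irrefl by metis+
  with assms(4,7) have "distinct [a, b, u, v]" by auto
  moreover have "a \<in> V" "b \<in> V"
    using assms(1,3) simple_graph_edge_in by metis+
  ultimately have "E a u \<or> E a v \<or> E b u \<or> E b v"
    using two_K2_freeD[OF assms(2)] assms(3,4,7) \<open>E u v\<close> by simp
  moreover have "\<not> E a u" "\<not> E a v" "\<not> E b u" "\<not> E b v"
    using assms(1,5,6,8,9) simple_graph_sym by metis+
  ultimately show False by blast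
qed

lemma card_Diff_le_of_cover:
  assumes "finite X" "finite C" "finite Y"
    and "X \<subseteq> C \<union> Y \<union> A" and "card A + card C \<le> card X"
  shows "card (A - X) \<le> card Y"
proof -
  have "card X \<le> card (C \<union> Y \<union> (X \<inter> A))"
    using assms by (intro card_mono) auto
  also have "\<dots> \<le> card C + card Y + card (X \<inter> A)"
    using card_Un_le[of "C \<union> Y" "X \<inter> A"] card_Un_le[of C Y] by linarith
  finally have "card A \<le> card Y + card (A \<inter> X)"
    using assms(5) by (simp add: Int_commute)
  moreover have "card (A - X) = card A - card (A \<inter> X)"
    using assms(1) by (simp add: card_Diff_subset_Int)
  ultimately show ?thesis by linarith
qed

locale large_minimal_dominating_set =
  fixes V :: "'a set" and E :: "'a \<Rightarrow> 'a \<Rightarrow> bool" and a b :: 'a and X :: "'a set"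
  assumes graph: "simple_graph V E"
    and two_K2_free: "two_K2_free V E"
    and edge: "E a b"
    and minimal: "minimal_dominating_set V E X"
    and a_in_X: "a \<in> X" and b_in_X: "b \<in> X"
    and card_X_gt_alpha: "card X > alpha V E"
begin

definition "A = {v \<in> V - {a, b}. \<not> E v a \<and> \<not> E v b}"
definition "N = {v \<in> V - {a, b}. E v a \<or> E v b}"
definition "Y = X \<inter> N"
definition "Z = {v \<in> A. \<exists>y\<in>Y. E v y}"

lemma X_subset_V: "X \<subseteq> V"
  using minimal unfolding minimal_dominating_set_def dominating_set_def by blast

lemma finite_X: "finite X"
  using X_subset_V graph finite_subset unfolding simple_graph_def by blast

lemma finite_Y: "finite Y"
  using finite_X unfolding Y_def by simp

lemma A_subset_V: "A \<subseteq> V"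
  unfolding A_def by blast

lemma finite_A: "finite A"
  using A_subset_V graph finite_subset unfolding simple_graph_def by blast

lemma A_nonadjacent:
  assumes "u \<in> A" and "v \<in> A"
  shows "\<not> E u v"
proof -
  have "u \<in> V - {a, b}" "\<not> E u a" "\<not> E u b" "v \<in> V - {a, b}" "\<not> E v a" "\<not> E v b"
    using assms unfolding A_def by blast+
  then show ?thesis
    by (rule two_K2_free_common_non_neighbours_nonadjacent[OF graph two_K2_free edge])
qed

lemma independent_insert_a_A: "independent_set V E (insert a A)"
  unfolding independent_set_def
proof (intro conjI ballI)
  have "a \<in> V"
    using graph edge simple_graph_edge_in by metis
  then show "insert a A \<subseteq> V"
    using A_subset_V by blast
  have a_loop: "\<not> E a a"
    using graph simple_graph_irrefl by metis
  have a_A: "\<not> E a w \<and> \<not> E w a" if "w \<in> A" for w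
proof -
    have "\<not> E w a" using that unfolding A_def by blast
    then show ?thesis using graph simple_graph_sym by metis
  qed
  fix u v assume "u \<in> insert a A" "v \<in> insert a A"
  then consider "u = a" "v = a" | "u = a" "v \<in> A" | "u \<in> A" "v = a" | "u \<in> A" "v \<in> A"
    by blast
  then show "\<not> E u v"
    by cases (simp_all add: a_loop a_A A_nonadjacent)
qed

lemma card_A_add_2_le_card_X: "card A + 2 \<le> card X"
proof -
  have "finite V" using graph unfolding simple_graph_def by blast
  then have "card (insert a A) \<le> alpha V E"
    using independent_insert_a_A by (rule independent_set_card_le_alpha)
  moreover have "a \<notin> A" unfolding A_def by blast
  ultimately show ?thesis
    using card_X_gt_alpha finite_A by simp
qed

lemma card_A_Diff_X_le: "card (A - X) \<le> card Y"
proof (rule card_Diff_le_of_cover[OF finite_X _ finite_Y])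
  show "finite {a, b}" by simp
  show "X \<subseteq> {a, b} \<union> Y \<union> A"
    using X_subset_V unfolding Y_def N_def A_def by blast
  have "card {a, b} \<le> 2"
    by (simp add: card_insert_le_m1)
  then show "card A + card {a, b} \<le> card X"
    using card_A_add_2_le_card_X by linarith
qed

lemma private_neighbour_in_A:
  assumes "private_neighbour V E X x v" and "x \<notin> {a, b}"
  shows "v \<in> A"
proof -
  have "\<not> E v a" "v \<noteq> a" "\<not> E v b" "v \<noteq> b"
    using private_neighbour_not_adjacent[OF assms(1)] assms(2) a_in_X b_in_X by blast+
  moreover have "v \<in> V"
    using assms(1) unfolding private_neighbour_def by blast
  ultimately show ?thesis
    unfolding A_def by blast
qed

lemma Z_subset_A_Diff_X: "Z \<subseteq> A - X"
proof
  fix z assume "z \<in> Z"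
  then obtain y where "y \<in> Y" "E z y" and "z \<in> A"
    unfolding Z_def by blast
  show "z \<in> A - X"
  proof
    show "z \<notin> X"
    proof
      assume "z \<in> X"
      moreover have "y \<in> X" using \<open>y \<in> Y\<close> unfolding Y_def by blast
      ultimately obtain v where v: "private_neighbour V E X z v"
        using minimal_dominating_set_private_neighbour[OF graph minimal _ _ \<open>E z y\<close>] by blast
      have "z \<notin> {a, b}" using \<open>z \<in> A\<close> unfolding A_def by blast
      with v have "v \<in> A" by (rule private_neighbour_in_A)
      moreover have "E z v" using v unfolding private_neighbour_def by blast
      ultimately show False
        using A_nonadjacent \<open>z \<in> A\<close> by blast
    qed
  qed fact
qed

lemma private_neighbour_map:
  obtains p where "\<And>y. y \<in> Y \<Longrightarrow> private_neighbour V E X y (p y)"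
proof -
  have "\<exists>v. private_neighbour V E X y v" if "y \<in> Y" for y
proof -
    have "y \<in> X" "E y a \<or> E y b"
      using that unfolding Y_def N_def by blast+
    then show ?thesis
      using minimal_dominating_set_private_neighbour[OF graph minimal] a_in_X b_in_X by metis
  qed
  then show ?thesis
    using that bchoice[of Y "\<lambda>y v. private_neighbour V E X y v"] by blast
qed

lemma private_neighbour_in_Z:
  assumes "y \<in> Y" and "private_neighbour V E X y v"
  shows "v \<in> Z"
proof -
  have "y \<notin> {a, b}" using assms(1) unfolding Y_def N_def by blast
  with assms(2) have "v \<in> A" by (rule private_neighbour_in_A)
  moreover have "E v y"
    using assms(2) graph simple_graph_sym unfolding private_neighbour_def by metis
  ultimately show ?thesis
    using assms(1) unfolding Z_def by blast
qed

lemma card_Y_eq_card_Z_private: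
  "card Y = card Z \<and> (\<forall>z\<in>Z. \<exists>y\<in>Y. private_neighbour V E X y z)"
proof -
  obtain p where p: "\<And>y. y \<in> Y \<Longrightarrow> private_neighbour V E X y (p y)"
    using private_neighbour_map by blast
  have image: "p ` Y \<subseteq> Z"
    using p private_neighbour_in_Z by blast
  have "inj_on p Y"
    using p private_neighbour_owner_unique[OF graph] by (metis inj_onI)
  then have "card (p ` Y) = card Y"
    by (rule card_image)
  moreover have "finite Z"
    using finite_A Z_subset_A_Diff_X by (meson finite_Diff finite_subset)
  then have "card (p ` Y) \<le> card Z"
    using image by (rule card_mono)
  moreover have "card Z \<le> card Y"
    using Z_subset_A_Diff_X finite_A card_A_Diff_X_le by (meson card_mono finite_Diff order_trans)
  ultimately have "card (p ` Y) = card Z" "card Y = card Z"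
    by linarith+
  then have "p ` Y = Z"
    using image \<open>finite Z\<close> by (meson card_subset_eq)
  moreover have "\<forall>z\<in>p ` Y. \<exists>y\<in>Y. private_neighbour V E X y z"
    using p by blast
  ultimately show ?thesis
    using \<open>card Y = card Z\<close> by simp
qed

end

theorem claim3:
  fixes V :: "'a set" and E :: "'a \<Rightarrow> 'a \<Rightarrow> bool" and a b :: 'a and X :: "'a set"
  assumes "simple_graph V E"
    and "two_K2_free V E"
    and "a \<in> V" and "b \<in> V" and "E a b"
    and "minimal_dominating_set V E X"
    and "a \<in> X" and "b \<in> X"
    and "card X > alpha V E"
  shows "let A = {v \<in> V - {a, b}. \<not> E v a \<and> \<not> E v b};
             N = {v \<in> V - {a, b}. E v a \<or> E v b};
             Y = X \<inter> N;
             Z = {v \<in> A. \<exists>y\<in>Y. E v y}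
         in card Y = card Z \<and> (\<forall>z\<in>Z. \<exists>y\<in>Y. private_neighbour V E X y z)"
proof -
  interpret large_minimal_dominating_set V E a b X
    using assms by unfold_locales
  show ?thesis
    using card_Y_eq_card_Z_private unfolding Let_def A_def N_def Y_def Z_def .
qed

end
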